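(* Over the family of 3-periodics of $E$: (i) the locus of the Feuerbach point $X_{11}$ (triangle center function $h=s_2s_3(s_2+s_3-s_1)(s_2-s_3)^2$) is the ellipse $x^2/a_c^2+y^2/b_c^2=1$ with $a_c=\dfrac{a(\delta-b^2)}{c^2}$, $b_c=\dfrac{b(a^2-\delta)}{c^2}$ (this ellipse is the confocal caustic to which all sides of all 3-periodics are tangent); (ii) the locus of $X_{55}$ ($h=s_1(s_2+s_3-s_1)$) is the ellipse $x^2/a_{55}^2+y^2/b_{55}^2=1$ with $a_{55}=\dfrac{a(\delta-b^2)}{a^2+b^2}$, $b_{55}=\dfrac{b(a^2-\delta)}{a^2+b^2}$, which is similar to the ellipse in (i).
   Context: Fix real numbers $a>b>0$, let $E$ be the ellipse $x^2/a^2+y^2/b^2=1$, $c^2=a^2-b^2$ and $\delta=\sqrt{a^4-a^2b^2+b^4}$. A 3-periodic is a non-degenerate triangle $P_1P_2P_3$ with all vertices on $E$ such that at each vertex $P_j$ the normal line to $E$ at $P_j$ bisects the interior angle of the triangle at $P_j$. For a triangle let $s_1=|P_2P_3|$, $s_2=|P_3P_1|$, $s_3=|P_1P_2|$. Given a triangle center function $h(s_1,s_2,s_3)$, the center $X_h$ is the point with trilinears $p:q:r=h(s_1,s_2,s_3):h(s_2,s_3,s_1):h(s_3,s_1,s_2)$, i.e. the Cartesian point $\dfrac{p s_1P_1+q s_2P_2+r s_3P_3}{p s_1+q s_2+r s_3}$. The locus of $X_h$ is the set of points $X_h(T)$ over all 3-periodics $T$. *)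

theory Defs
  imports "HOL-Analysis.Analysis"
begin

text \<open>Points of the plane are pairs of reals; dist on real \<times> real is the Euclidean distance.\<close>

definition on_ellipse :: "real \<Rightarrow> real \<Rightarrow> real \<times> real \<Rightarrow> bool" where
  "on_ellipse a b P \<longleftrightarrow> (fst P)^2 / a^2 + (snd P)^2 / b^2 = 1"

definition cross2 :: "real \<times> real \<Rightarrow> real \<times> real \<Rightarrow> real" where
  "cross2 u v = fst u * snd v - snd u * fst v"

text \<open>The normal line to the ellipse at P (direction (x/a^2, y/b^2)) is the
  bisector line of the interior angle QPR, whose direction is the sum of the
  unit vectors from P towards Q and towards R.\<close>
definition normal_bisects :: "real \<Rightarrow> real \<Rightarrow> real \<times> real \<Rightarrow> real \<times> real \<Rightarrow> real \<times> real \<Rightarrow> bool" where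
  "normal_bisects a b P Q R \<longleftrightarrow>
     cross2 ((1 / norm (Q - P)) *\<^sub>R (Q - P) + (1 / norm (R - P)) *\<^sub>R (R - P))
            (fst P / a^2, snd P / b^2) = 0"

definition three_periodic :: "real \<Rightarrow> real \<Rightarrow> real \<times> real \<Rightarrow> real \<times> real \<Rightarrow> real \<times> real \<Rightarrow> bool" where
  "three_periodic a b P1 P2 P3 \<longleftrightarrow>
     on_ellipse a b P1 \<and> on_ellipse a b P2 \<and> on_ellipse a b P3 \<and>
     cross2 (P2 - P1) (P3 - P1) \<noteq> 0 \<and>
     normal_bisects a b P1 P2 P3 \<and> normal_bisects a b P2 P3 P1 \<and> normal_bisects a b P3 P1 P2"

definition tri_center :: "(real \<Rightarrow> real \<Rightarrow> real \<Rightarrow> real) \<Rightarrow> real \<times> real \<Rightarrow> real \<times> real \<Rightarrow> real \<times> real \<Rightarrow> real \<times> real" where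
  "tri_center h P1 P2 P3 =
     (let s1 = dist P2 P3; s2 = dist P3 P1; s3 = dist P1 P2;
          p = h s1 s2 s3; q = h s2 s3 s1; r = h s3 s1 s2
      in (1 / (p * s1 + q * s2 + r * s3)) *\<^sub>R ((p * s1) *\<^sub>R P1 + (q * s2) *\<^sub>R P2 + (r * s3) *\<^sub>R P3))"

definition locus :: "(real \<Rightarrow> real \<Rightarrow> real \<Rightarrow> real) \<Rightarrow> real \<Rightarrow> real \<Rightarrow> (real \<times> real) set" where
  "locus h a b = {tri_center h P1 P2 P3 | P1 P2 P3. three_periodic a b P1 P2 P3}"

definition h_X11 :: "real \<Rightarrow> real \<Rightarrow> real \<Rightarrow> real" where
  "h_X11 s1 s2 s3 = s2 * s3 * (s2 + s3 - s1) * (s2 - s3)^2"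

definition h_X55 :: "real \<Rightarrow> real \<Rightarrow> real \<Rightarrow> real" where
  "h_X55 s1 s2 s3 = s1 * (s2 + s3 - s1)"

definition line_tangent_ellipse :: "real \<Rightarrow> real \<Rightarrow> real \<times> real \<Rightarrow> real \<times> real \<Rightarrow> bool" where
  "line_tangent_ellipse A B P Q \<longleftrightarrow> (\<exists>!X. on_ellipse A B X \<and> (\<exists>t::real. X = P + t *\<^sub>R (Q - P)))"

end

theory Submission
  imports Defs
begin

text \<open>Parametrize \<open>E\<close> rationally by \<open>x \<mapsto> (a(1-x\<^sup>2)/(1+x\<^sup>2), 2bx/(1+x\<^sup>2))\<close>. For
  \<open>Q \<noteq> P\<close> on \<open>E\<close> put \<open>\<lambda>(P,Q) = (ab \<mu>(P,Q) / |PQ|)\<^sup>2\<close> with \<open>\<mu>(P,Q) = 1 - \<langle>P,Q\<rangle>\<^sub>E\<close>: the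
  line \<open>PQ\<close> is tangent to the confocal ellipse with squared semi-axes \<open>a\<^sup>2 - \<lambda>\<close>, \<open>b\<^sup>2 - \<lambda>\<close>,
  and the normal at \<open>P\<close> bisects the angle \<open>QPR\<close> iff \<open>\<lambda>(P,Q) = \<lambda>(P,R)\<close>. So the three
  sides of a 3-periodic share one value \<open>\<lambda>\<close>, and Cayley's condition for a triangle to be
  inscribed in \<open>E\<close> and circumscribed about that conic leaves a single admissible value:
  all sides touch one caustic. In terms of the parameters \<open>x\<^sub>i\<close> of the vertices this reads
  \<open>\<sigma>\<^sub>2 = -k\<close>, \<open>\<sigma>\<^sub>1 = -k \<sigma>\<^sub>3\<close> for a constant \<open>k > 3\<close> determined by \<open>a, b\<close>, and every value
  of \<open>z = \<sigma>\<^sub>3\<close> occurs. The side lengths are proportional to \<open>(x\<^sub>j - x\<^sub>k)\<^sup>2 (1 + x\<^sub>i\<^sup>2)\<close>,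
  so the barycentric weights of \<open>X\<^sub>1\<^sub>1\<close> and \<open>X\<^sub>5\<^sub>5\<close> are polynomials in the \<open>x\<^sub>i\<close>;
  reduced modulo the two relations the centers become rational parametrizations, in \<open>z\<close>,
  of the stated ellipses.\<close>

section \<open>Rational parametrization of the ellipse\<close>

definition ellipse_param :: "real \<Rightarrow> real \<Rightarrow> real \<Rightarrow> real \<times> real" where
  "ellipse_param a b x = (a * (1 - x^2) / (1 + x^2), 2 * b * x / (1 + x^2))"

definition polar_gap :: "real \<Rightarrow> real \<Rightarrow> real \<times> real \<Rightarrow> real \<times> real \<Rightarrow> real" where
  "polar_gap a b P Q = 1 - (fst P * fst Q / a^2 + snd P * snd Q / b^2)"

definition chord_factor :: "real \<Rightarrow> real \<Rightarrow> real \<Rightarrow> real \<Rightarrow> real" where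
  "chord_factor A B x y = A * (x + y)^2 + B * (1 - x * y)^2"

lemma one_plus_sq_pos [simp]: "(0::real) < 1 + x^2"
  by (simp add: add_pos_nonneg)

lemma one_plus_sq_neq_0 [simp]: "1 + x^2 \<noteq> (0::real)"
  using one_plus_sq_pos[of x] by linarith

text \<open>Supplied to \<open>algebra\<close>, this lets it clear the denominators \<open>1 + x\<^sup>2\<close>.\<close>
lemma inverse_one_plus_sq: "inverse (1 + x^2) * (1 + x^2) = (1::real)"
  by simp

lemma dist_sq_eq: "(dist P Q)^2 = (fst P - fst Q)^2 + (snd P - snd Q)^2"
  by (cases P; cases Q) (simp add: dist_Pair_Pair dist_real_def)

lemma on_ellipse_param:
  assumes "a \<noteq> 0" "b \<noteq> 0"
  shows "on_ellipse a b (ellipse_param a b x)"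
proof -
  have "inverse (a^2) * a^2 = 1" "inverse (b^2) * b^2 = 1"
    using assms by simp_all
  then show ?thesis
    unfolding on_ellipse_def ellipse_param_def divide_inverse
    using inverse_one_plus_sq[of x] by (simp only: prod.sel) algebra
qed

lemma polar_gap_param:
  assumes "a \<noteq> 0" "b \<noteq> 0"
  shows "polar_gap a b (ellipse_param a b x) (ellipse_param a b y) = 2 * (x - y)^2 / ((1 + x^2) * (1 + y^2))"
proof -
  have "inverse (a^2) * a^2 = 1" "inverse (b^2) * b^2 = 1"
    using assms by simp_all
  then show ?thesis
    unfolding polar_gap_def ellipse_param_def divide_inverse inverse_mult_distrib
    using inverse_one_plus_sq[of x] inverse_one_plus_sq[of y] by (simp only: prod.sel) algebra
qed

lemma dist_sq_param:
  "(dist (ellipse_param a b x) (ellipse_param a b y))^2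
     = 4 * (x - y)^2 * chord_factor (a^2) (b^2) x y / ((1 + x^2)^2 * (1 + y^2)^2)"
  unfolding dist_sq_eq ellipse_param_def chord_factor_def divide_inverse inverse_mult_distrib
    power_inverse[symmetric]
  using inverse_one_plus_sq[of x] inverse_one_plus_sq[of y] by (simp only: prod.sel) algebra

lemma cross2_param:
  "cross2 (ellipse_param a b y - ellipse_param a b x) (ellipse_param a b z - ellipse_param a b x)
     = 4 * a * b * (y - x) * (z - x) * (z - y) / ((1 + x^2) * (1 + y^2) * (1 + z^2))"
  unfolding cross2_def ellipse_param_def divide_inverse inverse_mult_distrib
  using inverse_one_plus_sq[of x] inverse_one_plus_sq[of y] inverse_one_plus_sq[of z]
  by (simp only: prod.sel fst_diff snd_diff) algebra

lemma ellipse_param_surj: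
  assumes "a \<noteq> 0" "b \<noteq> 0" "on_ellipse a b P" "P \<noteq> (- a, 0)"
  obtains x where "P = ellipse_param a b x"
proof -
  define X Y where "X = fst P / a" and "Y = snd P / b"
  have P: "P = (a * X, b * Y)"
    using assms(1,2) unfolding X_def Y_def by simp
  have circle: "X^2 + Y^2 = 1"
    using assms(3) unfolding P on_ellipse_def using assms(1,2) by (simp add: power_mult_distrib)
  have "1 + X \<noteq> 0"
  proof
    assume "1 + X = 0"
    then have "X = -1"
      by simp
    with circle have "Y = 0"
      by simp
    with assms(4) P \<open>X = -1\<close> show False
      by simp
  qed
  define x where "x = Y / (1 + X)"
  have "inverse (1 + X) * (1 + X) = 1"
    using \<open>1 + X \<noteq> 0\<close> by simp
  moreover have "x = Y * inverse (1 + X)"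
    unfolding x_def by (simp add: divide_inverse)
  ultimately have "(1 + x^2) * ((1 + X) / 2) = 1"
    using circle by algebra
  then have "inverse (1 + x^2) = (1 + X) / 2"
    by (metis inverse_unique)
  then have "ellipse_param a b x = P"
    unfolding ellipse_param_def P divide_inverse x_def
    using \<open>inverse (1 + X) * (1 + X) = 1\<close> circle by simp algebra
  then show ?thesis
    using that by blast
qed

section \<open>The bisector condition\<close>

lemma cross2_add_left: "cross2 (u + v) w = cross2 u w + cross2 v w"
  unfolding cross2_def by (simp add: algebra_simps)

lemma cross2_scaleR_left: "cross2 (c *\<^sub>R u) w = c * cross2 u w"
  unfolding cross2_def by (simp add: algebra_simps)

lemma cross2_scaleR_right: "cross2 u (c *\<^sub>R w) = c * cross2 u w"
  unfolding cross2_def by (simp add: algebra_simps)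

lemma cross2_sq_add_inner_sq:
  fixes u v :: "real \<times> real"
  shows "(cross2 u v)^2 + (inner u v)^2 = (norm u)^2 * (norm v)^2"
  by (cases u; cases v) (simp add: cross2_def norm_Pair power2_eq_square algebra_simps)

lemma eq_if_inner_cross2_eq:
  fixes u v w :: "real \<times> real"
  assumes "w \<noteq> 0" "inner u w = inner v w" "cross2 u w = cross2 v w"
  shows "u = v"
proof -
  obtain u1 u2 v1 v2 w1 w2 where uvw: "u = (u1, u2)" "v = (v1, v2)" "w = (w1, w2)"
    by (cases u; cases v; cases w)
  have "w1^2 + w2^2 \<noteq> 0"
    using assms(1) uvw(3) by (auto simp: sum_power2_eq_zero_iff zero_prod_def)
  moreover have "u1 * w1 + u2 * w2 = v1 * w1 + v2 * w2" "u1 * w2 - u2 * w1 = v1 * w2 - v2 * w1"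
    using assms(2,3) unfolding uvw cross2_def by simp_all
  then have "(u1 - v1) * (w1^2 + w2^2) = 0" "(u2 - v2) * (w1^2 + w2^2) = 0"
    by algebra+
  ultimately show ?thesis
    using uvw by auto
qed

text \<open>Two distinct unit vectors making equal (obtuse) angles with \<open>n\<close> lie symmetrically
  about the line of \<open>n\<close>, so their sum is parallel to \<open>n\<close>.\<close>
lemma cross2_unit_sum_eq_0_iff:
  fixes u v n :: "real \<times> real"
  assumes "norm u = 1" "norm v = 1" "u \<noteq> v" "n \<noteq> 0" "inner u n < 0" "inner v n < 0"
  shows "cross2 (u + v) n = 0 \<longleftrightarrow> inner u n = inner v n"
proof
  assume "cross2 (u + v) n = 0"
  then have "(cross2 u n)^2 = (cross2 v n)^2"
    unfolding cross2_add_left by (simp add: eq_neg_iff_add_eq_0[symmetric])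
  then have "(inner u n)^2 = (inner v n)^2"
    using cross2_sq_add_inner_sq[of u n] cross2_sq_add_inner_sq[of v n] assms(1,2) by simp
  then show "inner u n = inner v n"
    using assms(5,6) by (simp add: power2_eq_iff)
next
  assume eq: "inner u n = inner v n"
  then have "(cross2 u n)^2 = (cross2 v n)^2"
    using cross2_sq_add_inner_sq[of u n] cross2_sq_add_inner_sq[of v n] assms(1,2) by simp
  moreover have "cross2 u n \<noteq> cross2 v n"
    using eq_if_inner_cross2_eq[OF assms(4) eq] assms(3) by blast
  ultimately have "cross2 u n = - cross2 v n"
    by (simp add: power2_eq_iff)
  then show "cross2 (u + v) n = 0"
    unfolding cross2_add_left by simp
qed

lemma polar_gap_sym: "polar_gap a b P Q = polar_gap a b Q P"
  unfolding polar_gap_def by (simp add: mult.commute)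

lemma polar_gap_on_ellipse:
  assumes "a \<noteq> 0" "b \<noteq> 0" "on_ellipse a b P" "on_ellipse a b Q"
  shows "2 * polar_gap a b P Q = (fst Q - fst P)^2 / a^2 + (snd Q - snd P)^2 / b^2"
  using assms unfolding on_ellipse_def polar_gap_def by (simp add: field_simps power2_eq_square)

lemma polar_gap_pos:
  assumes "a \<noteq> 0" "b \<noteq> 0" "on_ellipse a b P" "on_ellipse a b Q" "P \<noteq> Q"
  shows "polar_gap a b P Q > 0"
proof -
  have "fst Q - fst P \<noteq> 0 \<or> snd Q - snd P \<noteq> 0"
    using assms(5) by (auto simp: prod_eq_iff)
  then have "(fst Q - fst P)^2 / a^2 + (snd Q - snd P)^2 / b^2 > 0"
    using assms(1,2) by (auto simp: add_pos_nonneg add_nonneg_pos)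
  then show ?thesis
    using polar_gap_on_ellipse[OF assms(1-4)] by linarith
qed

lemma inner_ellipse_normal:
  assumes "on_ellipse a b P"
  shows "inner (Q - P) (fst P / a^2, snd P / b^2) = - polar_gap a b P Q"
proof -
  obtain p1 p2 q1 q2 where PQ: "P = (p1, p2)" "Q = (q1, q2)"
    by (cases P; cases Q)
  have "p1^2 * inverse (a^2) + p2^2 * inverse (b^2) = 1"
    using assms unfolding PQ on_ellipse_def divide_inverse by simp
  then show ?thesis
    unfolding PQ polar_gap_def divide_inverse by simp algebra
qed

lemma normal_bisects_iff_gap_ratio:
  assumes ab: "a \<noteq> 0" "b \<noteq> 0"
    and PQR: "on_ellipse a b P" "on_ellipse a b Q" "on_ellipse a b R"
    and nondeg: "cross2 (Q - P) (R - P) \<noteq> 0"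
  shows "normal_bisects a b P Q R \<longleftrightarrow> polar_gap a b P Q / dist P Q = polar_gap a b P R / dist P R"
proof -
  define n where "n = (fst P / a^2, snd P / b^2)"
  define u where "u = (1 / norm (Q - P)) *\<^sub>R (Q - P)"
  define v where "v = (1 / norm (R - P)) *\<^sub>R (R - P)"
  have QP: "Q \<noteq> P" and RP: "R \<noteq> P"
    using nondeg unfolding cross2_def by auto
  have n0: "n \<noteq> 0"
    using PQR(1) unfolding n_def on_ellipse_def using ab by (auto simp: zero_prod_def)
  have norm_uv: "norm u = 1" "norm v = 1"
    unfolding u_def v_def using QP RP by simp_all
  have inner_u: "inner u n = - (polar_gap a b P Q / dist P Q)"
    unfolding u_def n_def using inner_ellipse_normal[OF PQR(1), of Q]
    by (simp add: dist_norm norm_minus_commute)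
  have inner_v: "inner v n = - (polar_gap a b P R / dist P R)"
    unfolding v_def n_def using inner_ellipse_normal[OF PQR(1), of R]
    by (simp add: dist_norm norm_minus_commute)
  have "u \<noteq> v"
  proof
    assume "u = v"
    have "Q - P = norm (Q - P) *\<^sub>R u" "R - P = norm (R - P) *\<^sub>R v"
      unfolding u_def v_def using QP RP by simp_all
    then have "cross2 (Q - P) (R - P) = cross2 (norm (Q - P) *\<^sub>R u) (norm (R - P) *\<^sub>R u)"
      using \<open>u = v\<close> by metis
    then have "cross2 (Q - P) (R - P) = norm (Q - P) * norm (R - P) * cross2 u u"
      by (simp add: cross2_scaleR_left cross2_scaleR_right)
    then show False
      using nondeg by (simp add: cross2_def mult.commute)
  qed
  moreover have "inner u n < 0" "inner v n < 0"
    unfolding inner_u inner_v using polar_gap_pos[OF ab PQR(1,2) QP[symmetric]]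
      polar_gap_pos[OF ab PQR(1,3) RP[symmetric]] QP RP by simp_all
  ultimately have "cross2 (u + v) n = 0 \<longleftrightarrow> inner u n = inner v n"
    using cross2_unit_sum_eq_0_iff[OF norm_uv _ n0] by blast
  moreover have "normal_bisects a b P Q R \<longleftrightarrow> cross2 (u + v) n = 0"
    unfolding normal_bisects_def u_def v_def n_def ..
  ultimately show ?thesis
    unfolding inner_u inner_v by simp
qed

text \<open>The parameter \<open>L\<close> of the confocal conic \<open>x\<^sup>2/(a\<^sup>2 - L) + y\<^sup>2/(b\<^sup>2 - L) = 1\<close> tangent to
  the line \<open>PQ\<close> (see \<open>line_tangent_confocal\<close>).\<close>
definition chord_lambda :: "real \<Rightarrow> real \<Rightarrow> real \<times> real \<Rightarrow> real \<times> real \<Rightarrow> real" where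
  "chord_lambda a b P Q = (a * b * polar_gap a b P Q / dist P Q)^2"

lemma chord_lambda_sym: "chord_lambda a b P Q = chord_lambda a b Q P"
  unfolding chord_lambda_def by (simp add: polar_gap_sym dist_commute)

lemma normal_bisects_iff_chord_lambda:
  assumes ab: "a \<noteq> 0" "b \<noteq> 0"
    and PQR: "on_ellipse a b P" "on_ellipse a b Q" "on_ellipse a b R"
    and nondeg: "cross2 (Q - P) (R - P) \<noteq> 0"
  shows "normal_bisects a b P Q R \<longleftrightarrow> chord_lambda a b P Q = chord_lambda a b P R"
proof -
  have "Q \<noteq> P" "R \<noteq> P"
    using nondeg unfolding cross2_def by auto
  then have "polar_gap a b P Q / dist P Q > 0" "polar_gap a b P R / dist P R > 0"
    using polar_gap_pos[OF ab PQR(1,2)] polar_gap_pos[OF ab PQR(1,3)] by simp_all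
  then have "chord_lambda a b P Q = chord_lambda a b P R
      \<longleftrightarrow> polar_gap a b P Q / dist P Q = polar_gap a b P R / dist P R"
    unfolding chord_lambda_def times_divide_eq_right[symmetric] power_mult_distrib
    using ab by (simp add: power2_eq_iff_nonneg)
  then show ?thesis
    using normal_bisects_iff_gap_ratio[OF assms] by simp
qed

lemma chord_factor_pos:
  assumes "A > 0" "B > 0"
  shows "chord_factor A B x y > 0"
proof (cases "x * y = 1")
  case True
  have "x + y \<noteq> 0"
  proof
    assume "x + y = 0"
    then have "x * y = - (x^2)"
      by (simp add: power2_eq_square eq_neg_iff_add_eq_0[symmetric])
    with True show False
      by (smt (verit) zero_le_power2)
  qed
  then show ?thesis
    unfolding chord_factor_def using assms by (simp add: add_pos_nonneg)
next
  case False
  then show ?thesis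
    unfolding chord_factor_def using assms by (simp add: add_nonneg_pos)
qed

lemma chord_factor_sym: "chord_factor A B x y = chord_factor A B y x"
  unfolding chord_factor_def by (simp add: add.commute mult.commute)

lemma chord_lambda_param:
  assumes "a \<noteq> 0" "b \<noteq> 0" "x \<noteq> y"
  shows "chord_lambda a b (ellipse_param a b x) (ellipse_param a b y)
           = a^2 * b^2 * (x - y)^2 / chord_factor (a^2) (b^2) x y"
proof -
  define N where "N = chord_factor (a^2) (b^2) x y"
  define D where "D = (1 + x^2) * (1 + y^2)"
  define s where "s = (x - y)^2"
  have "N \<noteq> 0" "D \<noteq> 0" "s \<noteq> 0"
    using chord_factor_pos[of "a^2" "b^2" x y] assms unfolding N_def D_def s_def by simp_all
  have "chord_lambda a b (ellipse_param a b x) (ellipse_param a b y)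
      = a^2 * b^2 * (2 * s / D)^2 / (4 * s * N / D^2)"
    unfolding chord_lambda_def power_divide power_mult_distrib polar_gap_param[OF assms(1,2)]
      dist_sq_param N_def D_def s_def by simp
  also have "\<dots> = a^2 * b^2 * s / N"
    using \<open>N \<noteq> 0\<close> \<open>D \<noteq> 0\<close> \<open>s \<noteq> 0\<close> by (simp add: field_simps power2_eq_square)
  finally show ?thesis
    unfolding N_def s_def .
qed

text \<open>\<open>chord_lambda\<close> on parameters with denominators cleared; \<open>A\<close>, \<open>B\<close> stand for \<open>a\<^sup>2\<close>, \<open>b\<^sup>2\<close>.\<close>
definition confocal_chord :: "real \<Rightarrow> real \<Rightarrow> real \<Rightarrow> real \<Rightarrow> real \<Rightarrow> bool" where
  "confocal_chord A B L x y \<longleftrightarrow> L * chord_factor A B x y = A * B * (x - y)^2"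

lemma confocal_chord_sym: "confocal_chord A B L x y \<longleftrightarrow> confocal_chord A B L y x"
  unfolding confocal_chord_def chord_factor_sym[of A B x y] by (simp add: power2_commute)

lemma chord_lambda_param_eq_iff:
  assumes "a \<noteq> 0" "b \<noteq> 0" "x \<noteq> y"
  shows "chord_lambda a b (ellipse_param a b x) (ellipse_param a b y) = L
           \<longleftrightarrow> confocal_chord (a^2) (b^2) L x y"
  using chord_factor_pos[of "a^2" "b^2" x y] assms
  unfolding chord_lambda_param[OF assms] confocal_chord_def by (auto simp: field_simps)

lemma confocal_chord_vieta:
  assumes "confocal_chord A B L x y" "confocal_chord A B L x z" "y \<noteq> z"
  shows "(A * B - L * A - L * B * x^2) * (y + z) = 2 * x * (A * B + L * A - L * B)"
    and "(A * B - L * A - L * B * x^2) * (y * z) = A * B * x^2 - L * A * x^2 - L * B"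
proof -
  define qa where "qa = A * B - L * A - L * B * x^2"
  define qb where "qb = - 2 * x * (A * B + L * A - L * B)"
  define qc where "qc = A * B * x^2 - L * A * x^2 - L * B"
  have "qa * y^2 + qb * y + qc = 0" "qa * z^2 + qb * z + qc = 0"
    using assms(1,2) unfolding confocal_chord_def chord_factor_def qa_def qb_def qc_def by algebra+
  then have "(y - z) * (qa * (y + z) + qb) = 0" "(y - z) * (qa * (y * z) - qc) = 0"
    by algebra+
  then show "qa * (y + z) = 2 * x * (A * B + L * A - L * B)" "qa * (y * z) = qc"
    using assms(3) unfolding qb_def by simp_all
qed

definition cayley_poly :: "real \<Rightarrow> real \<Rightarrow> real \<Rightarrow> real" where
  "cayley_poly A B L = 3*A^2*B^2 - 2*A^2*B*L - A^2*L^2 - 2*A*B^2*L + 2*A*B*L^2 - B^2*L^2"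

text \<open>Cayley's condition for a triangle inscribed in the ellipse to be circumscribed about the
  confocal conic of parameter \<open>L\<close>.\<close>
lemma confocal_chord_triangle_cayley:
  assumes "A > 0" "B > 0" "L > 0" "y \<noteq> z"
    and "confocal_chord A B L x y" "confocal_chord A B L x z" "confocal_chord A B L y z"
  shows "cayley_poly A B L = 0"
proof -
  define qa where "qa = A * B - L * A - L * B * x^2"
  define qb where "qb = - 2 * x * (A * B + L * A - L * B)"
  define qc where "qc = A * B * x^2 - L * A * x^2 - L * B"
  have sum: "qa * (y + z) + qb = 0" and prod: "qa * (y * z) - qc = 0"
    using confocal_chord_vieta[OF assms(5,6,4)] unfolding qa_def qb_def qc_def by simp_all
  have "qa^2 * (L * chord_factor A B y z - A * B * (y - z)^2) = 0"
    using assms(7) unfolding confocal_chord_def by simp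
  then have "A * B * (qb^2 - 4 * qa * qc) - L * (A * qb^2 + B * (qa - qc)^2) = 0"
    unfolding chord_factor_def using sum prod by algebra
  moreover have "A * B * (qb^2 - 4 * qa * qc) - L * (A * qb^2 + B * (qa - qc)^2)
      = L * cayley_poly A B L * (B * (x^2 - 1)^2 + 4 * A * x^2)"
    unfolding qa_def qb_def qc_def cayley_poly_def by algebra
  moreover have "B * (x^2 - 1)^2 + 4 * A * x^2 > 0"
    using assms(1,2) by (cases "x = 0") (simp_all add: add_nonneg_pos)
  ultimately show ?thesis
    using assms(3) by simp
qed

lemma cross2_rotate: "cross2 (P3 - P2) (P1 - P2) = cross2 (P2 - P1) (P3 - P1)"
  unfolding cross2_def by (simp add: algebra_simps)

lemma three_periodic_iff_chord_lambda:
  assumes ab: "a \<noteq> 0" "b \<noteq> 0"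
    and on: "on_ellipse a b P1" "on_ellipse a b P2" "on_ellipse a b P3"
    and nondeg: "cross2 (P2 - P1) (P3 - P1) \<noteq> 0"
  shows "three_periodic a b P1 P2 P3 \<longleftrightarrow>
           chord_lambda a b P1 P2 = chord_lambda a b P2 P3 \<and>
           chord_lambda a b P2 P3 = chord_lambda a b P3 P1"
proof -
  have nondeg2: "cross2 (P3 - P2) (P1 - P2) \<noteq> 0" and nondeg3: "cross2 (P1 - P3) (P2 - P3) \<noteq> 0"
    using nondeg cross2_rotate[of P3 P2 P1] cross2_rotate[of P1 P3 P2] by simp_all
  show ?thesis
    unfolding three_periodic_def normal_bisects_iff_chord_lambda[OF ab on nondeg]
      normal_bisects_iff_chord_lambda[OF ab on(2,3,1) nondeg2]
      normal_bisects_iff_chord_lambda[OF ab on(3,1,2) nondeg3]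
      chord_lambda_sym[of a b P1 P3] chord_lambda_sym[of a b P2 P1] chord_lambda_sym[of a b P3 P2]
    using on nondeg by auto
qed

lemma three_periodic_rotate:
  assumes "three_periodic a b P1 P2 P3"
  shows "three_periodic a b P2 P3 P1"
  using assms cross2_rotate[of P3 P2 P1] unfolding three_periodic_def by simp

lemma three_periodic_distinct:
  assumes "three_periodic a b P1 P2 P3"
  shows "P1 \<noteq> P2" "P1 \<noteq> P3" "P2 \<noteq> P3"
  using assms unfolding three_periodic_def cross2_def by auto

text \<open>At a vertex on the major axis the normal is the axis itself, so the other two
  vertices would have to lie on it as well.\<close>
lemma three_periodic_axis:
  assumes "a \<noteq> 0" "three_periodic a b P1 P2 P3" "snd P1 = 0"
  shows "snd P2 \<noteq> 0"
proof
  assume "snd P2 = 0"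
  have on: "on_ellipse a b P1" and nondeg: "cross2 (P2 - P1) (P3 - P1) \<noteq> 0"
    and bis: "normal_bisects a b P1 P2 P3"
    using assms(2) unfolding three_periodic_def by simp_all
  have "fst P1 \<noteq> 0"
    using on assms(3) unfolding on_ellipse_def by auto
  have "P3 \<noteq> P1"
    using nondeg unfolding cross2_def by auto
  have "snd P3 / norm (P3 - P1) * (fst P1 / a^2) = 0"
    using bis \<open>snd P1 = 0\<close> \<open>snd P2 = 0\<close> unfolding normal_bisects_def cross2_def by simp
  then have "snd P3 = 0"
    using \<open>fst P1 \<noteq> 0\<close> \<open>P3 \<noteq> P1\<close> assms(1) by simp
  then show False
    using nondeg \<open>snd P1 = 0\<close> \<open>snd P2 = 0\<close> unfolding cross2_def by simp
qed

section \<open>Reflection in the minor axis\<close>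

definition reflect :: "real \<times> real \<Rightarrow> real \<times> real" where
  "reflect P = (- fst P, snd P)"

lemma reflect_reflect [simp]: "reflect (reflect P) = P"
  unfolding reflect_def by simp

lemma reflect_add: "reflect (P + Q) = reflect P + reflect Q"
  unfolding reflect_def by simp

lemma reflect_diff: "reflect P - reflect Q = reflect (P - Q)"
  unfolding reflect_def by simp

lemma reflect_scaleR: "reflect (c *\<^sub>R P) = c *\<^sub>R reflect P"
  unfolding reflect_def by simp

lemma norm_reflect: "norm (reflect P) = norm P"
  by (cases P) (simp add: reflect_def norm_Pair)

lemma dist_reflect: "dist (reflect P) (reflect Q) = dist P Q"
  unfolding dist_norm reflect_diff norm_reflect ..

lemma cross2_reflect: "cross2 (reflect u) (reflect v) = - cross2 u v"
  unfolding reflect_def cross2_def by simp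

lemma on_ellipse_reflect: "on_ellipse a b (reflect P) \<longleftrightarrow> on_ellipse a b P"
  unfolding reflect_def on_ellipse_def by simp

lemma normal_bisects_reflect:
  "normal_bisects a b (reflect P) (reflect Q) (reflect R) \<longleftrightarrow> normal_bisects a b P Q R"
proof -
  have normal: "(fst (reflect P) / a^2, snd (reflect P) / b^2) = reflect (fst P / a^2, snd P / b^2)"
    unfolding reflect_def by simp
  show ?thesis
    unfolding normal_bisects_def reflect_diff norm_reflect reflect_scaleR[symmetric]
      reflect_add[symmetric] normal cross2_reflect by simp
qed

lemma three_periodic_reflect:
  "three_periodic a b (reflect P1) (reflect P2) (reflect P3) \<longleftrightarrow> three_periodic a b P1 P2 P3"
  unfolding three_periodic_def on_ellipse_reflect normal_bisects_reflect reflect_diff cross2_reflect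
  by simp

lemma chord_lambda_reflect: "chord_lambda a b (reflect P) (reflect Q) = chord_lambda a b P Q"
  unfolding chord_lambda_def polar_gap_def dist_reflect by (simp add: reflect_def)

lemma tri_center_reflect:
  "tri_center h (reflect P1) (reflect P2) (reflect P3) = reflect (tri_center h P1 P2 P3)"
  unfolding tri_center_def Let_def dist_reflect reflect_scaleR reflect_add ..

lemma locus_reflect:
  assumes "X \<in> locus h a b"
  shows "reflect X \<in> locus h a b"
proof -
  obtain P1 P2 P3 where "X = tri_center h P1 P2 P3" "three_periodic a b P1 P2 P3"
    using assms unfolding locus_def by blast
  then have "reflect X = tri_center h (reflect P1) (reflect P2) (reflect P3)"
    "three_periodic a b (reflect P1) (reflect P2) (reflect P3)"
    by (simp_all add: tri_center_reflect three_periodic_reflect)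
  then show ?thesis
    unfolding locus_def by blast
qed

lemma locus_eq_ellipseI:
  assumes "A \<noteq> 0" "B \<noteq> 0"
    and forward: "\<And>P1 P2 P3. three_periodic a b P1 P2 P3 \<Longrightarrow> on_ellipse A B (tri_center h P1 P2 P3)"
    and onto: "\<And>z. reflect (ellipse_param A B z) \<in> locus h a b"
  shows "locus h a b = {X. on_ellipse A B X}"
proof (intro set_eqI iffI)
  fix X
  assume "X \<in> locus h a b"
  then show "X \<in> {X. on_ellipse A B X}"
    using forward unfolding locus_def by auto
next
  fix X
  assume "X \<in> {X. on_ellipse A B X}"
  then have on: "on_ellipse A B (reflect X)"
    by (simp add: on_ellipse_reflect)
  show "X \<in> locus h a b"
  proof (cases "reflect X = (- A, 0)")
    case True
    then have "X = reflect (reflect (ellipse_param A B 0))"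
      unfolding reflect_def ellipse_param_def by (simp add: prod_eq_iff)
    then show ?thesis
      using locus_reflect onto by metis
  next
    case False
    then obtain z where "reflect X = ellipse_param A B z"
      using ellipse_param_surj[OF assms(1,2) on] by blast
    then show ?thesis
      using onto[of z] by (metis reflect_reflect)
  qed
qed

section \<open>Tangency to confocal ellipses\<close>

lemma line_tangent_ellipse_quadratic:
  assumes "P \<noteq> Q" "\<alpha> \<noteq> 0" "\<beta>^2 = 4 * \<alpha> * \<gamma>"
    and meet: "\<And>t. on_ellipse A B (P + t *\<^sub>R (Q - P)) \<longleftrightarrow> \<alpha> * t^2 + \<beta> * t + \<gamma> = 0"
  shows "line_tangent_ellipse A B P Q"
proof -
  define t0 where "t0 = - \<beta> / (2 * \<alpha>)"
  have square: "\<alpha> * t^2 + \<beta> * t + \<gamma> = \<alpha> * (t - t0)^2" for t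
  proof -
    have "\<gamma> = \<beta>^2 / (4 * \<alpha>)"
      using assms(2,3) by (simp add: field_simps)
    then show ?thesis
      unfolding t0_def using assms(2) by (simp add: field_simps power2_eq_square)
  qed
  show ?thesis
    unfolding line_tangent_ellipse_def
  proof (rule ex1I[of _ "P + t0 *\<^sub>R (Q - P)"])
    show "on_ellipse A B (P + t0 *\<^sub>R (Q - P)) \<and> (\<exists>t. P + t0 *\<^sub>R (Q - P) = P + t *\<^sub>R (Q - P))"
      using meet square by auto
  next
    fix X
    assume "on_ellipse A B X \<and> (\<exists>t. X = P + t *\<^sub>R (Q - P))"
    then obtain t where t: "X = P + t *\<^sub>R (Q - P)" "on_ellipse A B X"
      by blast
    then have "t = t0"
      using meet[of t] square[of t] assms(2) by simp
    then show "X = P + t0 *\<^sub>R (Q - P)"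
      using t by simp
  qed
qed

lemma chord_lambda_eq_cross2:
  assumes ab: "a \<noteq> 0" "b \<noteq> 0" and on: "on_ellipse a b P" "on_ellipse a b Q"
    and "P \<noteq> Q" "chord_lambda a b P Q = L"
  shows "(b^2 - L) * (fst Q - fst P)^2 + (a^2 - L) * (snd Q - snd P)^2 = (cross2 P (Q - P))^2"
proof -
  obtain p1 p2 q1 q2 where PQ: "P = (p1, p2)" "Q = (q1, q2)"
    by (cases P; cases Q)
  have eP: "b^2 * p1^2 + a^2 * p2^2 = a^2 * b^2" and eQ: "b^2 * q1^2 + a^2 * q2^2 = a^2 * b^2"
    using on ab unfolding PQ on_ellipse_def by (simp_all add: field_simps)
  have gap: "a^2 * b^2 * polar_gap a b P Q = a^2 * b^2 - b^2 * p1 * q1 - a^2 * p2 * q2"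
    unfolding PQ polar_gap_def using ab by (simp add: field_simps)
  have "dist P Q \<noteq> 0"
    using \<open>P \<noteq> Q\<close> by simp
  then have "L * (dist P Q)^2 = a^2 * b^2 * (polar_gap a b P Q)^2"
    using assms(6) unfolding chord_lambda_def by (simp add: field_simps power2_eq_square)
  moreover have "(dist P Q)^2 = (q1 - p1)^2 + (q2 - p2)^2"
    unfolding dist_sq_eq PQ by (simp add: power2_commute)
  moreover have "a^2 * b^2 * (b^2 * (q1 - p1)^2 + a^2 * (q2 - p2)^2 - (p1 * (q2 - p2) - p2 * (q1 - p1))^2)
      = a^2 * b^2 * (a^2 * b^2 * (polar_gap a b P Q)^2)"
    using eP eQ gap by algebra
  then have "b^2 * (q1 - p1)^2 + a^2 * (q2 - p2)^2 - (p1 * (q2 - p2) - p2 * (q1 - p1))^2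
      = a^2 * b^2 * (polar_gap a b P Q)^2"
    using ab by simp
  ultimately show ?thesis
    unfolding PQ cross2_def by (simp add: algebra_simps)
qed

lemma line_tangent_confocal:
  assumes ab: "a \<noteq> 0" "b \<noteq> 0" and AB: "A \<noteq> 0" "B \<noteq> 0" "A^2 = a^2 - L" "B^2 = b^2 - L"
    and on: "on_ellipse a b P" "on_ellipse a b Q" and "P \<noteq> Q"
    and lambda: "chord_lambda a b P Q = L"
  shows "line_tangent_ellipse A B P Q"
proof -
  obtain p1 p2 q1 q2 where PQ: "P = (p1, p2)" "Q = (q1, q2)"
    by (cases P; cases Q)
  define d1 d2 where "d1 = q1 - p1" and "d2 = q2 - p2"
  define \<alpha> \<beta> \<gamma> where "\<alpha> = d1^2 / A^2 + d2^2 / B^2" and "\<beta> = 2 * (p1 * d1 / A^2 + p2 * d2 / B^2)"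
    and "\<gamma> = p1^2 / A^2 + p2^2 / B^2 - 1"
  have "d1 \<noteq> 0 \<or> d2 \<noteq> 0"
    using \<open>P \<noteq> Q\<close> unfolding PQ d1_def d2_def by auto
  then have "\<alpha> > 0"
    unfolding \<alpha>_def using AB(1,2) by (auto simp: add_pos_nonneg add_nonneg_pos)
  have "B^2 * d1^2 + A^2 * d2^2 - (p1 * d2 - p2 * d1)^2 = 0"
    using chord_lambda_eq_cross2[OF ab on \<open>P \<noteq> Q\<close> lambda] unfolding AB(3,4) PQ d1_def d2_def cross2_def
    by simp
  moreover have "\<beta>^2 - 4 * \<alpha> * \<gamma> = 4 * (B^2 * d1^2 + A^2 * d2^2 - (p1 * d2 - p2 * d1)^2) / (A^2 * B^2)"
    unfolding \<alpha>_def \<beta>_def \<gamma>_def using AB(1,2) by (simp add: field_simps) algebra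
  ultimately have "\<beta>^2 = 4 * \<alpha> * \<gamma>"
    by simp
  moreover have "on_ellipse A B (P + t *\<^sub>R (Q - P)) \<longleftrightarrow> \<alpha> * t^2 + \<beta> * t + \<gamma> = 0" for t
  proof -
    have "on_ellipse A B (P + t *\<^sub>R (Q - P)) \<longleftrightarrow> (p1 + t * d1)^2 / A^2 + (p2 + t * d2)^2 / B^2 = 1"
      unfolding on_ellipse_def PQ d1_def d2_def by simp
    also have "(p1 + t * d1)^2 / A^2 + (p2 + t * d2)^2 / B^2 = \<alpha> * t^2 + \<beta> * t + \<gamma> + 1"
      unfolding \<alpha>_def \<beta>_def \<gamma>_def using AB(1,2) by (simp add: field_simps power2_eq_square)
    finally show ?thesis
      by simp
  qed
  ultimately show ?thesis
    using \<open>P \<noteq> Q\<close> \<open>\<alpha> > 0\<close> by (intro line_tangent_ellipse_quadratic[of P Q \<alpha> \<beta> \<gamma>]) simp_all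
qed

section \<open>Triangle centers with homogeneous center functions\<close>

definition bary ::
    "real \<Rightarrow> real \<Rightarrow> real \<Rightarrow> real \<times> real \<Rightarrow> real \<times> real \<Rightarrow> real \<times> real \<Rightarrow> real \<times> real" where
  "bary w1 w2 w3 P1 P2 P3 = (1 / (w1 + w2 + w3)) *\<^sub>R (w1 *\<^sub>R P1 + w2 *\<^sub>R P2 + w3 *\<^sub>R P3)"

lemma bary_scale:
  assumes "c \<noteq> 0"
  shows "bary (c * w1) (c * w2) (c * w3) P1 P2 P3 = bary w1 w2 w3 P1 P2 P3"
proof -
  have "bary (c * w1) (c * w2) (c * w3) P1 P2 P3
      = (1 / (c * (w1 + w2 + w3))) *\<^sub>R (c *\<^sub>R (w1 *\<^sub>R P1 + w2 *\<^sub>R P2 + w3 *\<^sub>R P3))"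
    unfolding bary_def by (simp add: algebra_simps)
  then show ?thesis
    unfolding bary_def using assms by simp
qed

lemma tri_center_homogeneous:
  assumes hom: "\<And>m1 m2 m3. h (t * m1) (t * m2) (t * m3) = t^n * h m1 m2 m3" and "t \<noteq> 0"
    and sides: "dist P2 P3 = t * m1" "dist P3 P1 = t * m2" "dist P1 P2 = t * m3"
  shows "tri_center h P1 P2 P3 = bary (h m1 m2 m3 * m1) (h m2 m3 m1 * m2) (h m3 m1 m2 * m3) P1 P2 P3"
proof -
  have "tri_center h P1 P2 P3
      = bary (t^(n+1) * (h m1 m2 m3 * m1)) (t^(n+1) * (h m2 m3 m1 * m2)) (t^(n+1) * (h m3 m1 m2 * m3)) P1 P2 P3"
    unfolding tri_center_def Let_def sides hom bary_def by (simp add: algebra_simps)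
  then show ?thesis
    using bary_scale[of "t^(n+1)"] \<open>t \<noteq> 0\<close> by simp
qed

lemma h_X11_homogeneous: "h_X11 (t * m1) (t * m2) (t * m3) = t^5 * h_X11 m1 m2 m3"
  unfolding h_X11_def by algebra

lemma h_X55_homogeneous: "h_X55 (t * m1) (t * m2) (t * m3) = t^2 * h_X55 m1 m2 m3"
  unfolding h_X55_def by algebra

definition bary_num_x :: "real \<Rightarrow> real \<Rightarrow> real \<Rightarrow> real \<Rightarrow> real \<Rightarrow> real \<Rightarrow> real" where
  "bary_num_x w1 w2 w3 x1 x2 x3 = w1 * (1 - x1^2) * (1 + x2^2) * (1 + x3^2)
     + w2 * (1 - x2^2) * (1 + x1^2) * (1 + x3^2) + w3 * (1 - x3^2) * (1 + x1^2) * (1 + x2^2)"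

definition bary_num_y :: "real \<Rightarrow> real \<Rightarrow> real \<Rightarrow> real \<Rightarrow> real \<Rightarrow> real \<Rightarrow> real" where
  "bary_num_y w1 w2 w3 x1 x2 x3 = w1 * x1 * (1 + x2^2) * (1 + x3^2)
     + w2 * x2 * (1 + x1^2) * (1 + x3^2) + w3 * x3 * (1 + x1^2) * (1 + x2^2)"

definition bary_den :: "real \<Rightarrow> real \<Rightarrow> real \<Rightarrow> real \<Rightarrow> real \<Rightarrow> real \<Rightarrow> real" where
  "bary_den w1 w2 w3 x1 x2 x3 = (w1 + w2 + w3) * (1 + x1^2) * (1 + x2^2) * (1 + x3^2)"

lemma bary_ellipse_param:
  "bary w1 w2 w3 (ellipse_param a b x1) (ellipse_param a b x2) (ellipse_param a b x3)
     = (a * bary_num_x w1 w2 w3 x1 x2 x3 / bary_den w1 w2 w3 x1 x2 x3,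
        2 * b * bary_num_y w1 w2 w3 x1 x2 x3 / bary_den w1 w2 w3 x1 x2 x3)"
  unfolding bary_def ellipse_param_def bary_num_x_def bary_num_y_def bary_den_def
    divide_inverse inverse_mult_distrib
  using inverse_one_plus_sq[of x1] inverse_one_plus_sq[of x2] inverse_one_plus_sq[of x3]
  by (simp only: scaleR_Pair add_Pair prod.inject real_scaleR_def) (intro conjI; algebra)

definition side_factor :: "real \<Rightarrow> real \<Rightarrow> real \<Rightarrow> real" where
  "side_factor x y z = (y - z)^2 * (1 + x^2)"

lemma dist_param_confocal_chord:
  assumes "a > 0" "b > 0" "confocal_chord (a^2) (b^2) L x y"
  shows "dist (ellipse_param a b x) (ellipse_param a b y)
           = 2 * a * b / sqrt L * ((x - y)^2 / ((1 + x^2) * (1 + y^2)))"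
proof (cases "x = y")
  case False
  have ab: "a \<noteq> 0" "b \<noteq> 0"
    using assms by simp_all
  define d where "d = dist (ellipse_param a b x) (ellipse_param a b y)"
  define g where "g = polar_gap a b (ellipse_param a b x) (ellipse_param a b y)"
  have g: "g = 2 * ((x - y)^2 / ((1 + x^2) * (1 + y^2)))"
    unfolding g_def polar_gap_param[OF ab] by simp
  have "d^2 > 0"
    unfolding d_def dist_sq_param using chord_factor_pos[of "a^2" "b^2" x y] assms False by simp
  then have "d > 0"
    unfolding d_def by simp
  moreover have "g > 0"
    unfolding g using False by simp
  moreover have "(a * b * g / d)^2 = L"
    using chord_lambda_param_eq_iff[OF ab False] assms(3) unfolding chord_lambda_def d_def g_def by simp
  ultimately have "a * b * g / d = sqrt L"
    using assms(1,2) by (metis real_sqrt_unique less_eq_real_def divide_pos_pos mult_pos_pos)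
  then have "d = a * b * g / sqrt L"
    using \<open>d > 0\<close> \<open>g > 0\<close> assms(1,2) by (auto simp: field_simps)
  then show ?thesis
    unfolding d_def g by (simp add: mult_ac)
qed simp

lemma bary_ellipse_param_eq_reflect:
  assumes "bary_den w1 w2 w3 x1 x2 x3 \<noteq> 0" "q \<noteq> 0"
    and "bary_num_x w1 w2 w3 x1 x2 x3 * ((1 + z^2) * q) = - p * (1 - z^2) * bary_den w1 w2 w3 x1 x2 x3"
    and "bary_num_y w1 w2 w3 x1 x2 x3 * ((1 + z^2) * q) = r * z * bary_den w1 w2 w3 x1 x2 x3"
  shows "bary w1 w2 w3 (ellipse_param a b x1) (ellipse_param a b x2) (ellipse_param a b x3)
           = reflect (ellipse_param (a * p / q) (b * r / q) z)"
proof -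
  define X Y D where "X = bary_num_x w1 w2 w3 x1 x2 x3" and "Y = bary_num_y w1 w2 w3 x1 x2 x3"
    and "D = bary_den w1 w2 w3 x1 x2 x3"
  have "D \<noteq> 0" "(1 + z^2) * q \<noteq> 0"
    using assms(1,2) unfolding D_def by simp_all
  moreover have "a * X * ((1 + z^2) * q) = a * (- p * (1 - z^2)) * D"
    "2 * b * Y * ((1 + z^2) * q) = 2 * b * (r * z) * D"
    using assms(3,4) unfolding X_def Y_def D_def by algebra+
  ultimately have "a * X / D = a * (- p * (1 - z^2)) / ((1 + z^2) * q)"
    "2 * b * Y / D = 2 * b * (r * z) / ((1 + z^2) * q)"
    by (subst frac_eq_eq; simp)+
  then show ?thesis
    unfolding bary_ellipse_param X_def[symmetric] Y_def[symmetric] D_def[symmetric]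
    by (simp add: reflect_def ellipse_param_def field_simps minus_divide_left)
qed

section \<open>A cubic with three real roots\<close>

lemma vieta_cubic:
  fixes c2 c1 c0 x1 x2 x3 :: real
  assumes "x1 \<noteq> x2" "x1 \<noteq> x3" "x2 \<noteq> x3"
    and "x1^3 + c2 * x1^2 + c1 * x1 + c0 = 0" "x2^3 + c2 * x2^2 + c1 * x2 + c0 = 0"
      "x3^3 + c2 * x3^2 + c1 * x3 + c0 = 0"
  shows "x1 + x2 + x3 = - c2" "x1 * x2 + x1 * x3 + x2 * x3 = c1" "x1 * x2 * x3 = - c0"
proof -
  have "(x1 - x2) * (x1^2 + x1 * x2 + x2^2 + c2 * (x1 + x2) + c1) = 0"
    "(x1 - x3) * (x1^2 + x1 * x3 + x3^2 + c2 * (x1 + x3) + c1) = 0"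
    using assms(4-6) by algebra+
  then have "x1^2 + x1 * x2 + x2^2 + c2 * (x1 + x2) + c1 = 0" "x1^2 + x1 * x3 + x3^2 + c2 * (x1 + x3) + c1 = 0"
    using assms(1,2) by simp_all
  then have "(x2 - x3) * (x1 + x2 + x3 + c2) = 0"
    by algebra
  then show sum: "x1 + x2 + x3 = - c2"
    using assms(3) by simp
  show prod2: "x1 * x2 + x1 * x3 + x2 * x3 = c1"
    using sum \<open>x1^2 + x1 * x2 + x2^2 + c2 * (x1 + x2) + c1 = 0\<close> by algebra
  show "x1 * x2 * x3 = - c0"
    using assms(4) sum prod2 by algebra
qed

lemma monic_cubic_sign_at_bound:
  fixes c2 c1 c0 :: real
  defines "M \<equiv> 1 + \<bar>c2\<bar> + \<bar>c1\<bar> + \<bar>c0\<bar>"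
  shows "M^3 + c2 * M^2 + c1 * M + c0 > 0" "(- M)^3 + c2 * (- M)^2 + c1 * (- M) + c0 < 0"
proof -
  have "1 \<le> M"
    unfolding M_def by simp
  have "M * 1 \<le> M * M"
    using \<open>1 \<le> M\<close> by (intro mult_left_mono) simp_all
  then have "M \<le> M^2" "1 \<le> M^2"
    using \<open>1 \<le> M\<close> by (simp_all add: power2_eq_square, linarith)
  then have "\<bar>c1\<bar> * M \<le> \<bar>c1\<bar> * M^2" "\<bar>c0\<bar> * 1 \<le> \<bar>c0\<bar> * M^2"
    by (intro mult_left_mono; simp)+
  then have "\<bar>c2 * M^2\<bar> + \<bar>c1 * M\<bar> + \<bar>c0\<bar> \<le> (\<bar>c2\<bar> + \<bar>c1\<bar> + \<bar>c0\<bar>) * M^2"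
    using \<open>1 \<le> M\<close> by (simp add: abs_mult distrib_right)
  also have "\<dots> = M^3 - M^2"
    unfolding M_def by algebra
  finally have bound: "\<bar>c2 * M^2\<bar> + \<bar>c1 * M\<bar> + \<bar>c0\<bar> \<le> M^3 - M^2" .
  have "M^2 > 0"
    using \<open>1 \<le> M\<close> by simp
  then show "M^3 + c2 * M^2 + c1 * M + c0 > 0" "(- M)^3 + c2 * (- M)^2 + c1 * (- M) + c0 < 0"
    using bound by (simp_all add: abs_le_iff, linarith+)
qed

lemma billiard_cubic_roots:
  fixes k z :: real
  assumes "k > 1"
  defines "p \<equiv> \<lambda>x. x^3 + (k * z) * x^2 + (- k) * x + (- z)"
  obtains x1 x2 x3 where "x1 < x2" "x2 < x3" "p x1 = 0" "p x2 = 0" "p x3 = 0"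
proof -
  define r where "r = 1 / sqrt k"
  define M where "M = 1 + \<bar>k * z\<bar> + \<bar>- k\<bar> + \<bar>- z\<bar>"
  have cont: "continuous_on S p" for S
    unfolding p_def by (intro continuous_intros)
  have "r > 0" "r^2 = 1 / k"
    unfolding r_def using assms by (simp_all add: power_divide)
  then have "k * r^2 = 1" "r^2 < 1"
    using assms by simp_all
  then have "r^2 < k"
    using assms by linarith
  have "r < 1"
    using \<open>r^2 < 1\<close> \<open>r > 0\<close> by (simp add: power_less_one_iff abs_square_less_1)
  then have "r < M"
    unfolding M_def by linarith
  have "p r = r * (r^2 - k)" "p (- r) = r * (k - r^2)"
    unfolding p_def using \<open>k * r^2 = 1\<close> by algebra+
  then have "p r < 0" "p (- r) > 0"
    using \<open>r > 0\<close> \<open>r^2 < k\<close> by (simp_all add: mult_pos_neg)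
  moreover have "p M > 0" "p (- M) < 0"
    unfolding p_def M_def using monic_cubic_sign_at_bound[of "k * z" "- k" "- z"] by simp_all
  ultimately obtain x1 x2 x3 where
    "- M \<le> x1" "x1 \<le> - r" "p x1 = 0" "- r \<le> x2" "x2 \<le> r" "p x2 = 0" "r \<le> x3" "x3 \<le> M" "p x3 = 0"
    using IVT'[of p "- M" 0 "- r"] IVT2'[of p r 0 "- r"] IVT'[of p r 0 M] cont \<open>r > 0\<close> \<open>r < M\<close>
    by (smt (verit))
  moreover have "x1 \<noteq> - r" "x2 \<noteq> r" "x3 \<noteq> r"
    using \<open>p r < 0\<close> \<open>p (- r) > 0\<close> \<open>p x1 = 0\<close> \<open>p x2 = 0\<close> \<open>p x3 = 0\<close> by auto
  ultimately show ?thesis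
    using that by (smt (verit))
qed

section \<open>Billiard triples\<close>

text \<open>\<open>k\<close> is the value of \<open>-(x\<^sub>1x\<^sub>2 + x\<^sub>1x\<^sub>3 + x\<^sub>2x\<^sub>3)\<close> common to all 3-periodics; it is
  the root \<open>k > 3\<close> of \<open>4ka\<^sup>2 = b\<^sup>2(k - 1)(k + 3)\<close>.\<close>
locale billiard_ellipse =
  fixes a b k :: real
  assumes a_pos: "a > 0" and b_pos: "b > 0" and k_gt_3: "k > 3"
    and a_sq: "4 * k * a^2 = b^2 * (k - 1) * (k + 3)"
begin

abbreviation vertex :: "real \<Rightarrow> real \<times> real" where
  "vertex x \<equiv> ellipse_param a b x"

lemma ab_neq_0: "a \<noteq> 0" "b \<noteq> 0"
  using a_pos b_pos by simp_all

lemma b_sq_less_a_sq: "b^2 < a^2"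
proof -
  have "4 * k * (a^2 - b^2) = b^2 * (k - 3) * (k + 1)"
    using a_sq by algebra
  moreover have "b^2 * (k - 3) * (k + 1) > 0"
    using k_gt_3 b_pos by simp
  ultimately have "4 * k * (a^2 - b^2) > 0"
    by simp
  then show ?thesis
    using k_gt_3 by (auto simp: zero_less_mult_iff)
qed

definition caustic_param :: real where
  "caustic_param = b^2 * (k - 1) * (k + 3) / (k + 1)^2"

lemma caustic_param_eq: "(k + 1)^2 * caustic_param = b^2 * (k - 1) * (k + 3)"
  unfolding caustic_param_def using k_gt_3 by simp

lemma caustic_param_pos: "caustic_param > 0"
  unfolding caustic_param_def using k_gt_3 b_pos by simp

lemma caustic_param_unique:
  assumes "L > 0" "cayley_poly (a^2) (b^2) L = 0"
  shows "L = caustic_param"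
proof -
  have "16 * k^2 * cayley_poly (a^2) (b^2) L
      = - (b^4 * ((k + 1)^2 * L - b^2 * (k - 1) * (k + 3)) * ((k - 3)^2 * L + 3 * b^2 * (k - 1) * (k + 3)))"
    unfolding cayley_poly_def using a_sq by algebra
  moreover have "(k - 3)^2 * L + 3 * b^2 * (k - 1) * (k + 3) > 0"
    using k_gt_3 b_pos assms(1) by (simp add: add_nonneg_pos)
  ultimately have "(k + 1)^2 * L - b^2 * (k - 1) * (k + 3) = 0"
    using assms(2) b_pos k_gt_3 by simp
  then have "(k + 1)^2 * L = (k + 1)^2 * caustic_param"
    unfolding caustic_param_eq by simp
  then show ?thesis
    using k_gt_3 by simp
qed

text \<open>The parameters of the vertices of a 3-periodic are the roots of
  \<open>x\<^sup>3 + k z x\<^sup>2 - k x - z\<close>, where \<open>z\<close> is their product.\<close>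
definition billiard_triple :: "real \<Rightarrow> real \<Rightarrow> real \<Rightarrow> bool" where
  "billiard_triple x1 x2 x3 \<longleftrightarrow> x1 \<noteq> x2 \<and> x1 \<noteq> x3 \<and> x2 \<noteq> x3 \<and>
     x1 * x2 + x1 * x3 + x2 * x3 = - k \<and> x1 + x2 + x3 = - k * (x1 * x2 * x3)"

lemma billiard_triple_rotate: "billiard_triple x1 x2 x3 \<Longrightarrow> billiard_triple x2 x3 x1"
  unfolding billiard_triple_def by (simp add: algebra_simps)

lemma billiard_triple_confocal_chord:
  assumes "billiard_triple x1 x2 x3"
  shows "confocal_chord (a^2) (b^2) caustic_param x1 x2"
proof -
  have "x1 * x2 + x1 * x3 + x2 * x3 = - k" "x1 + x2 + x3 = - k * (x1 * x2 * x3)"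
    using assms unfolding billiard_triple_def by simp_all
  then have "(x1 + x2)^2 = (k + x1 * x2) * (1 + k * x1 * x2)"
    by algebra
  then have "4 * k * (k + 1)^2 * (caustic_param * chord_factor (a^2) (b^2) x1 x2 - a^2 * b^2 * (x1 - x2)^2) = 0"
    unfolding chord_factor_def using a_sq caustic_param_eq by algebra
  then show ?thesis
    unfolding confocal_chord_def using k_gt_3 by simp
qed

lemma billiard_tripleI:
  assumes "x1 \<noteq> x2" "x1 \<noteq> x3" "x2 \<noteq> x3"
    and "confocal_chord (a^2) (b^2) caustic_param x1 x2" "confocal_chord (a^2) (b^2) caustic_param x1 x3"
  shows "billiard_triple x1 x2 x3"
proof -
  define L where "L = caustic_param"
  define qa where "qa = a^2 * b^2 - L * a^2 - L * b^2 * x1^2"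
  define qb where "qb = - 2 * x1 * (a^2 * b^2 + L * a^2 - L * b^2)"
  define qc where "qc = a^2 * b^2 * x1^2 - L * a^2 * x1^2 - L * b^2"
  have sum: "qa * (x2 + x3) + qb = 0" and prod: "qa * (x2 * x3) - qc = 0"
    using confocal_chord_vieta[OF assms(4,5,3)] unfolding qa_def qb_def qc_def L_def by simp_all
  have "qa \<noteq> 0"
  proof
    assume "qa = 0"
    have "L * (a^2 - b^2) > 0"
      using b_sq_less_a_sq caustic_param_pos unfolding L_def by simp
    moreover have "a^2 * b^2 > 0"
      using a_pos b_pos by simp
    ultimately have "a^2 * b^2 + L * a^2 - L * b^2 > 0"
      by (simp add: algebra_simps)
    with \<open>qa = 0\<close>
    have "x1 = 0"
      using sum unfolding qb_def by simp
    then show False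
      using \<open>qa = 0\<close> prod caustic_param_pos b_pos unfolding qc_def L_def by simp
  qed
  have "4 * k * (k + 1)^2 * (- x1 * qb + qc + k * qa) = 0"
    "4 * k * (k + 1)^2 * (qa * x1 - qb + k * x1 * qc) = 0"
    unfolding qa_def qb_def qc_def L_def using a_sq caustic_param_eq by algebra+
  then have "- x1 * qb + qc + k * qa = 0" "qa * x1 - qb + k * x1 * qc = 0"
    using k_gt_3 by simp_all
  then have "qa * (x1 * x2 + x1 * x3 + x2 * x3 + k) = 0" "qa * (x1 + x2 + x3 + k * (x1 * x2 * x3)) = 0"
    using sum prod by algebra+
  then show ?thesis
    unfolding billiard_triple_def using assms(1-3) \<open>qa \<noteq> 0\<close> by (simp add: eq_neg_iff_add_eq_0)
qed

lemma three_periodic_vertex_iff: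
  assumes distinct: "x1 \<noteq> x2" "x1 \<noteq> x3" "x2 \<noteq> x3"
  shows "three_periodic a b (vertex x1) (vertex x2) (vertex x3) \<longleftrightarrow> billiard_triple x1 x2 x3"
proof -
  have on: "on_ellipse a b (vertex x1)" "on_ellipse a b (vertex x2)" "on_ellipse a b (vertex x3)"
    using on_ellipse_param[OF ab_neq_0] by blast+
  have "cross2 (vertex x2 - vertex x1) (vertex x3 - vertex x1) \<noteq> 0"
    unfolding cross2_param using distinct a_pos b_pos by simp
  note tp_iff = three_periodic_iff_chord_lambda[OF ab_neq_0 on this]
  note chord_iff = chord_lambda_param_eq_iff[OF ab_neq_0]
  show ?thesis
  proof
    assume "three_periodic a b (vertex x1) (vertex x2) (vertex x3)"
    then have "chord_lambda a b (vertex x1) (vertex x2) = chord_lambda a b (vertex x2) (vertex x3)"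
      "chord_lambda a b (vertex x3) (vertex x1) = chord_lambda a b (vertex x2) (vertex x3)"
      using tp_iff by simp_all
    moreover define L where "L = chord_lambda a b (vertex x2) (vertex x3)"
    ultimately have "confocal_chord (a^2) (b^2) L x1 x2" "confocal_chord (a^2) (b^2) L x2 x3"
      "confocal_chord (a^2) (b^2) L x1 x3"
      using chord_iff distinct confocal_chord_sym by metis+
    moreover have "L > 0"
      unfolding L_def chord_lambda_param[OF ab_neq_0 distinct(3)]
      using chord_factor_pos[of "a^2" "b^2" x2 x3] a_pos b_pos distinct by simp
    ultimately have "L = caustic_param"
      using caustic_param_unique confocal_chord_triangle_cayley[of "a^2" "b^2" L x2 x3 x1] a_pos b_pos
        distinct(3) by simp
    then show "billiard_triple x1 x2 x3"
      using billiard_tripleI distinct \<open>confocal_chord (a^2) (b^2) L x1 x2\<close>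
        \<open>confocal_chord (a^2) (b^2) L x1 x3\<close> by blast
  next
    assume "billiard_triple x1 x2 x3"
    then have "confocal_chord (a^2) (b^2) caustic_param x1 x2"
      "confocal_chord (a^2) (b^2) caustic_param x2 x3" "confocal_chord (a^2) (b^2) caustic_param x3 x1"
      using billiard_triple_confocal_chord billiard_triple_rotate by blast+
    then show "three_periodic a b (vertex x1) (vertex x2) (vertex x3)"
      unfolding tp_iff using chord_iff distinct by metis
  qed
qed

lemma three_periodic_vertices_param:
  assumes "three_periodic a b P1 P2 P3" "(- a, 0) \<notin> {P1, P2, P3}"
  shows "\<exists>x1 x2 x3. billiard_triple x1 x2 x3 \<and> P1 = vertex x1 \<and> P2 = vertex x2 \<and> P3 = vertex x3"
proof -
  have "on_ellipse a b P1" "on_ellipse a b P2" "on_ellipse a b P3"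
    using assms(1) unfolding three_periodic_def by simp_all
  then obtain x1 x2 x3 where x: "P1 = vertex x1" "P2 = vertex x2" "P3 = vertex x3"
    using ellipse_param_surj[OF ab_neq_0] assms(2) by (metis insertCI)
  then have "x1 \<noteq> x2" "x1 \<noteq> x3" "x2 \<noteq> x3"
    using three_periodic_distinct[OF assms(1)] by auto
  then have "billiard_triple x1 x2 x3"
    using three_periodic_vertex_iff assms(1) x by blast
  with x show ?thesis
    by blast
qed

text \<open>\<open>ellipse_param\<close> misses \<open>(-a, 0)\<close>; a 3-periodic through that point is reflected
  first, which works because no 3-periodic passes through both \<open>(a, 0)\<close> and \<open>(-a, 0)\<close>.\<close>
lemma three_periodic_vertices:
  assumes "three_periodic a b P1 P2 P3"
  obtains x1 x2 x3 where "billiard_triple x1 x2 x3"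
      "P1 = vertex x1" "P2 = vertex x2" "P3 = vertex x3"
    | x1 x2 x3 where "billiard_triple x1 x2 x3"
      "P1 = reflect (vertex x1)" "P2 = reflect (vertex x2)" "P3 = reflect (vertex x3)"
proof (cases "(- a, 0) \<in> {P1, P2, P3}")
  case False
  then show ?thesis
    using three_periodic_vertices_param[OF assms] that(1) by blast
next
  case True
  have "three_periodic a b P2 P3 P1" "three_periodic a b P3 P1 P2"
    using assms three_periodic_rotate by blast+
  then have "\<not> (snd P1 = 0 \<and> snd P2 = 0)" "\<not> (snd P2 = 0 \<and> snd P3 = 0)" "\<not> (snd P3 = 0 \<and> snd P1 = 0)"
    using three_periodic_axis[OF ab_neq_0(1)] assms by blast+
  then have "(a, 0) \<notin> {P1, P2, P3}"
    using \<open>(- a, 0) \<in> {P1, P2, P3}\<close> a_pos by auto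
  then have "(- a, 0) \<notin> {reflect P1, reflect P2, reflect P3}"
    unfolding reflect_def by (auto simp: prod_eq_iff)
  moreover have "three_periodic a b (reflect P1) (reflect P2) (reflect P3)"
    using assms three_periodic_reflect by blast
  ultimately obtain x1 x2 x3 where "billiard_triple x1 x2 x3"
    "reflect P1 = vertex x1" "reflect P2 = vertex x2" "reflect P3 = vertex x3"
    using three_periodic_vertices_param[of "reflect P1" "reflect P2" "reflect P3"] by auto
  moreover from this(2-4) have "P1 = reflect (vertex x1)" "P2 = reflect (vertex x2)" "P3 = reflect (vertex x3)"
    by (metis reflect_reflect)+
  ultimately show ?thesis
    using that(2) by blast
qed

lemma tri_center_vertex:
  assumes "billiard_triple x1 x2 x3"
    and hom: "\<And>t m1 m2 m3. h (t * m1) (t * m2) (t * m3) = t^n * h m1 m2 m3"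
  defines "m1 \<equiv> side_factor x1 x2 x3" and "m2 \<equiv> side_factor x2 x3 x1" and "m3 \<equiv> side_factor x3 x1 x2"
  shows "tri_center h (vertex x1) (vertex x2) (vertex x3)
           = bary (h m1 m2 m3 * m1) (h m2 m3 m1 * m2) (h m3 m1 m2 * m3) (vertex x1) (vertex x2) (vertex x3)"
proof -
  define \<pi> where "\<pi> = (1 + x1^2) * (1 + x2^2) * (1 + x3^2)"
  define t where "t = 2 * a * b / (sqrt caustic_param * \<pi>)"
  have dist_vertex: "dist (vertex y) (vertex z) = t * side_factor x y z"
    if "billiard_triple x y z" "(1 + x^2) * (1 + y^2) * (1 + z^2) = \<pi>" for x y z
  proof -
    have "confocal_chord (a^2) (b^2) caustic_param y z"
      using billiard_triple_confocal_chord billiard_triple_rotate that(1) by blast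
    then have "dist (vertex y) (vertex z)
        = 2 * a * b / sqrt caustic_param * ((y - z)^2 / ((1 + y^2) * (1 + z^2)))"
      using dist_param_confocal_chord a_pos b_pos by blast
    also have "\<dots> = t * side_factor x y z"
    proof -
      have "c / s * (e / (v * w)) = c / (s * (u * v * w)) * (e * u)"
        if "s \<noteq> 0" "u \<noteq> 0" "v \<noteq> 0" "w \<noteq> 0" for c e s u v w :: real
        using that by (simp add: field_simps)
      then show ?thesis
        unfolding t_def side_factor_def that(2)[symmetric] using caustic_param_pos by simp
    qed
    finally show ?thesis .
  qed
  have "t \<noteq> 0"
    unfolding t_def \<pi>_def using a_pos b_pos caustic_param_pos by simp
  moreover have "billiard_triple x2 x3 x1" "billiard_triple x3 x1 x2"
    using assms(1) billiard_triple_rotate by blast+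
  then have "dist (vertex x2) (vertex x3) = t * m1" "dist (vertex x3) (vertex x1) = t * m2"
    "dist (vertex x1) (vertex x2) = t * m3"
    using dist_vertex[of x1 x2 x3] dist_vertex[of x2 x3 x1] dist_vertex[of x3 x1 x2] assms(1)
    unfolding m1_def m2_def m3_def \<pi>_def by (simp_all add: mult_ac)
  with \<open>t \<noteq> 0\<close> show ?thesis
    using tri_center_homogeneous[where h = h and t = t and n = n, OF hom] by blast
qed

section \<open>The loci of X11 and X55\<close>

definition caustic_a :: real where "caustic_a = a * (k - 1) / (k + 1)"
definition caustic_b :: real where "caustic_b = 2 * b / (k + 1)"
definition x55_a :: real where "x55_a = a * ((k - 1) * (k - 3)) / (k^2 + 6 * k - 3)"
definition x55_b :: real where "x55_b = b * (2 * (k - 3)) / (k^2 + 6 * k - 3)"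

lemma x55_denom_pos: "k^2 + 6 * k - 3 > 0"
  using k_gt_3 zero_le_power2[of k] by linarith

lemma x55_den_coeff_pos:
  "2*k^8 + 32*k^7 + 184*k^6 + 448*k^5 + 300*k^4 - 480*k^3 - 648*k^2 + 162 > 0"
proof -
  define t where "t = k - 3"
  have shift: "2*k^8 + 32*k^7 + 184*k^6 + 448*k^5 + 300*k^4 - 480*k^3 - 648*k^2 + 162
      = 2*t^8 + 80*t^7 + 1360*t^6 + 12832*t^5 + 73440*t^4 + 260736*t^3 + 559872*t^2 + 663552*t + 331776"
    unfolding t_def by algebra
  have "t > 0"
    unfolding t_def using k_gt_3 by simp
  then have "2*t^8 + 80*t^7 + 1360*t^6 + 12832*t^5 + 73440*t^4 + 260736*t^3 + 559872*t^2 + 663552*t + 331776 > 0"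
    by (simp add: add_pos_pos)
  then show ?thesis
    unfolding shift .
qed

lemma billiard_triple_side_factors_neq_0:
  assumes "billiard_triple x1 x2 x3"
  shows "side_factor x1 x2 x3 * side_factor x2 x3 x1 * side_factor x3 x1 x2 \<noteq> 0"
  using assms unfolding billiard_triple_def side_factor_def by auto

lemma tri_center_X11_vertex:
  assumes "billiard_triple x1 x2 x3"
  shows "tri_center h_X11 (vertex x1) (vertex x2) (vertex x3)
           = reflect (ellipse_param caustic_a caustic_b (- (x1 * x2 * x3)))"
proof -
  define m1 m2 m3 where "m1 = side_factor x1 x2 x3" and "m2 = side_factor x2 x3 x1"
    and "m3 = side_factor x3 x1 x2"
  define w1 w2 w3 where "w1 = (m2 + m3 - m1) * (m2 - m3)^2" and "w2 = (m3 + m1 - m2) * (m3 - m1)^2"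
    and "w3 = (m1 + m2 - m3) * (m1 - m2)^2"
  define z where "z = x1 * x2 * x3"
  have \<sigma>: "x1 * x2 + x1 * x3 + x2 * x3 = - k" "x1 + x2 + x3 = - k * (x1 * x2 * x3)"
    using assms unfolding billiard_triple_def by simp_all
  have "tri_center h_X11 (vertex x1) (vertex x2) (vertex x3)
      = bary ((m1 * m2 * m3) * w1) ((m1 * m2 * m3) * w2) ((m1 * m2 * m3) * w3) (vertex x1) (vertex x2) (vertex x3)"
    using tri_center_vertex[where h = h_X11 and n = 5, OF assms h_X11_homogeneous]
    unfolding m1_def[symmetric] m2_def[symmetric] m3_def[symmetric] h_X11_def w1_def w2_def w3_def
    by (simp add: algebra_simps)
  also have "\<dots> = bary w1 w2 w3 (vertex x1) (vertex x2) (vertex x3)"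
    using bary_scale billiard_triple_side_factors_neq_0[OF assms] unfolding m1_def m2_def m3_def
    by blast
  also have "\<dots> = reflect (ellipse_param (a * (k - 1) / (k + 1)) (b * 2 / (k + 1)) (- z))"
  proof (rule bary_ellipse_param_eq_reflect)
    have "bary_den w1 w2 w3 x1 x2 x3 = (1 + z^2)^2 * (8 * k^3 * (k + 1)^2 * (k - 3)^2 * (1 - z^2)^2
        + 2 * (k - 3)^2 * (k + 1)^2 * (k - 1) * (k + 3)^3 * z^2)"
      unfolding bary_den_def w1_def w2_def w3_def m1_def m2_def m3_def side_factor_def z_def
      using \<sigma> by algebra
    moreover have "8 * k^3 * (k + 1)^2 * (k - 3)^2 * (1 - z^2)^2
        + 2 * (k - 3)^2 * (k + 1)^2 * (k - 1) * (k + 3)^3 * z^2 > 0"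
      using k_gt_3 by (cases "z = 0") (simp_all add: add_nonneg_pos)
    ultimately show "bary_den w1 w2 w3 x1 x2 x3 \<noteq> 0"
      by simp
    show "k + 1 \<noteq> 0"
      using k_gt_3 by simp
    show "bary_num_x w1 w2 w3 x1 x2 x3 * ((1 + (- z)^2) * (k + 1))
        = - (k - 1) * (1 - (- z)^2) * bary_den w1 w2 w3 x1 x2 x3"
      unfolding bary_num_x_def bary_den_def w1_def w2_def w3_def m1_def m2_def m3_def side_factor_def z_def
      using \<sigma> by algebra
    show "bary_num_y w1 w2 w3 x1 x2 x3 * ((1 + (- z)^2) * (k + 1))
        = 2 * (- z) * bary_den w1 w2 w3 x1 x2 x3"
      unfolding bary_num_y_def bary_den_def w1_def w2_def w3_def m1_def m2_def m3_def side_factor_def z_def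
      using \<sigma> by algebra
  qed
  finally show ?thesis
    unfolding caustic_a_def caustic_b_def z_def by (simp add: mult.commute)
qed

lemma tri_center_X55_vertex:
  assumes "billiard_triple x1 x2 x3"
  shows "tri_center h_X55 (vertex x1) (vertex x2) (vertex x3)
           = reflect (ellipse_param x55_a x55_b (x1 * x2 * x3))"
proof -
  define m1 m2 m3 where "m1 = side_factor x1 x2 x3" and "m2 = side_factor x2 x3 x1"
    and "m3 = side_factor x3 x1 x2"
  define w1 w2 w3 where "w1 = h_X55 m1 m2 m3 * m1" and "w2 = h_X55 m2 m3 m1 * m2"
    and "w3 = h_X55 m3 m1 m2 * m3"
  define z where "z = x1 * x2 * x3"
  define q where "q = k^2 + 6 * k - 3"
  have \<sigma>: "x1 * x2 + x1 * x3 + x2 * x3 = - k" "x1 + x2 + x3 = - k * (x1 * x2 * x3)"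
    using assms unfolding billiard_triple_def by simp_all
  have "tri_center h_X55 (vertex x1) (vertex x2) (vertex x3) = bary w1 w2 w3 (vertex x1) (vertex x2) (vertex x3)"
    using tri_center_vertex[where h = h_X55 and n = 2, OF assms h_X55_homogeneous]
    unfolding w1_def w2_def w3_def m1_def m2_def m3_def .
  also have "\<dots> = reflect (ellipse_param (a * ((k - 1) * (k - 3)) / q) (b * (2 * (k - 3)) / q) z)"
  proof (rule bary_ellipse_param_eq_reflect)
    define c where "c = 2*k^8 + 32*k^7 + 184*k^6 + 448*k^5 + 300*k^4 - 480*k^3 - 648*k^2 + 162"
    have "bary_den w1 w2 w3 x1 x2 x3 = (1 + z^2)^2 * (8 * k^3 * (k + 1)^2 * q * (1 - z^2)^2 + c * z^2)"
      unfolding bary_den_def w1_def w2_def w3_def m1_def m2_def m3_def side_factor_def z_def q_def c_def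
        h_X55_def
      using \<sigma> by algebra
    moreover have "c > 0"
      unfolding c_def by (rule x55_den_coeff_pos)
    moreover have "q > 0"
      unfolding q_def by (rule x55_denom_pos)
    ultimately have "bary_den w1 w2 w3 x1 x2 x3 > 0"
      using k_gt_3 by (cases "z = 0") (simp_all add: add_nonneg_pos)
    then show "bary_den w1 w2 w3 x1 x2 x3 \<noteq> 0"
      by simp
    show "q \<noteq> 0"
      using \<open>q > 0\<close> by simp
    show "bary_num_x w1 w2 w3 x1 x2 x3 * ((1 + z^2) * q)
        = - ((k - 1) * (k - 3)) * (1 - z^2) * bary_den w1 w2 w3 x1 x2 x3"
      unfolding bary_num_x_def bary_den_def w1_def w2_def w3_def m1_def m2_def m3_def side_factor_def
        z_def q_def h_X55_def
      using \<sigma> by algebra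
    show "bary_num_y w1 w2 w3 x1 x2 x3 * ((1 + z^2) * q)
        = (2 * (k - 3)) * z * bary_den w1 w2 w3 x1 x2 x3"
      unfolding bary_num_y_def bary_den_def w1_def w2_def w3_def m1_def m2_def m3_def side_factor_def
        z_def q_def h_X55_def
      using \<sigma> by algebra
  qed
  finally show ?thesis
    unfolding x55_a_def x55_b_def z_def q_def .
qed

lemma billiard_triple_exists:
  obtains x1 x2 x3 where "billiard_triple x1 x2 x3" "x1 * x2 * x3 = z"
proof -
  obtain x1 x2 x3 where "x1 < x2" "x2 < x3"
    and roots: "x1^3 + (k * z) * x1^2 + (- k) * x1 + (- z) = 0" "x2^3 + (k * z) * x2^2 + (- k) * x2 + (- z) = 0"
      "x3^3 + (k * z) * x3^2 + (- k) * x3 + (- z) = 0"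
    using billiard_cubic_roots[of k z] k_gt_3 by auto
  then have "x1 \<noteq> x2" "x1 \<noteq> x3" "x2 \<noteq> x3"
    by simp_all
  note vieta = vieta_cubic[OF this roots]
  then have "billiard_triple x1 x2 x3"
    unfolding billiard_triple_def using \<open>x1 \<noteq> x2\<close> \<open>x1 \<noteq> x3\<close> \<open>x2 \<noteq> x3\<close> by simp
  then show ?thesis
    using that vieta(3) by simp
qed

lemma locus_eq_ellipse_if_vertex_center:
  assumes "A \<noteq> 0" "B \<noteq> 0" "surj g"
    and center: "\<And>x1 x2 x3. billiard_triple x1 x2 x3 \<Longrightarrow>
      tri_center h (vertex x1) (vertex x2) (vertex x3) = reflect (ellipse_param A B (g (x1 * x2 * x3)))"
  shows "locus h a b = {X. on_ellipse A B X}"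
proof (rule locus_eq_ellipseI[OF assms(1,2)])
  fix P1 P2 P3
  assume "three_periodic a b P1 P2 P3"
  then show "on_ellipse A B (tri_center h P1 P2 P3)"
    by (cases rule: three_periodic_vertices)
      (simp_all add: center tri_center_reflect on_ellipse_reflect on_ellipse_param assms(1,2))
next
  fix z
  obtain w where "g w = z"
    using \<open>surj g\<close> by (metis surjD)
  obtain x1 x2 x3 where triple: "billiard_triple x1 x2 x3" "x1 * x2 * x3 = w"
    using billiard_triple_exists by blast
  then have "three_periodic a b (vertex x1) (vertex x2) (vertex x3)"
    using three_periodic_vertex_iff unfolding billiard_triple_def by blast
  moreover have "reflect (ellipse_param A B z) = tri_center h (vertex x1) (vertex x2) (vertex x3)"
    using center[OF triple(1)] triple(2) \<open>g w = z\<close> by simp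
  ultimately show "reflect (ellipse_param A B z) \<in> locus h a b"
    unfolding locus_def by blast
qed

lemma caustic_axes_pos: "caustic_a > 0" "caustic_b > 0"
  unfolding caustic_a_def caustic_b_def using a_pos b_pos k_gt_3 by simp_all

lemma x55_axes_pos: "x55_a > 0" "x55_b > 0"
  unfolding x55_a_def x55_b_def using a_pos b_pos k_gt_3 x55_denom_pos by simp_all

lemma locus_X11: "locus h_X11 a b = {X. on_ellipse caustic_a caustic_b X}"
proof (rule locus_eq_ellipse_if_vertex_center[where g = uminus])
  show "caustic_a \<noteq> 0" "caustic_b \<noteq> 0"
    using caustic_axes_pos by simp_all
  show "surj (uminus :: real \<Rightarrow> real)"
    by (rule surjI[of _ uminus]) simp
qed (rule tri_center_X11_vertex)

lemma locus_X55: "locus h_X55 a b = {X. on_ellipse x55_a x55_b X}"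
proof (rule locus_eq_ellipse_if_vertex_center[where g = id])
  show "x55_a \<noteq> 0" "x55_b \<noteq> 0"
    using x55_axes_pos by simp_all
qed (simp_all add: tri_center_X55_vertex)

lemma x55_axes_ratio: "x55_a / x55_b = caustic_a / caustic_b"
proof -
  have cancel: "(x / q) / (y / q) = x / y" if "q \<noteq> 0" for x y q :: real
    using that by (cases "y = 0") (simp_all add: field_simps)
  have "x55_a / x55_b = (a * (k - 1)) * (k - 3) / ((2 * b) * (k - 3))"
    unfolding x55_a_def x55_b_def using cancel x55_denom_pos by (simp add: mult_ac)
  also have "\<dots> = caustic_a / caustic_b"
    unfolding caustic_a_def caustic_b_def using cancel k_gt_3 by simp
  finally show ?thesis .
qed

lemma caustic_axes_sq: "caustic_a^2 = a^2 - caustic_param" "caustic_b^2 = b^2 - caustic_param"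
proof -
  have "(k + 1)^2 \<noteq> 0"
    using k_gt_3 by simp
  have "caustic_a^2 = (a^2 * (k + 1)^2 - b^2 * (k - 1) * (k + 3)) / (k + 1)^2"
    unfolding caustic_a_def power_divide using a_sq by (simp add: power_mult_distrib) algebra
  then show "caustic_a^2 = a^2 - caustic_param"
    unfolding caustic_param_def diff_divide_distrib using \<open>(k + 1)^2 \<noteq> 0\<close> by simp
  have "caustic_b^2 = (b^2 * (k + 1)^2 - b^2 * (k - 1) * (k + 3)) / (k + 1)^2"
    unfolding caustic_b_def power_divide by (simp add: power_mult_distrib) algebra
  then show "caustic_b^2 = b^2 - caustic_param"
    unfolding caustic_param_def diff_divide_distrib using \<open>(k + 1)^2 \<noteq> 0\<close> by simp
qed

lemma three_periodic_chord_lambda: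
  assumes "three_periodic a b P1 P2 P3"
  shows "chord_lambda a b P1 P2 = caustic_param"
proof -
  have vertex: "chord_lambda a b (vertex x1) (vertex x2) = caustic_param" if "billiard_triple x1 x2 x3"
    for x1 x2 x3
    using chord_lambda_param_eq_iff[OF ab_neq_0] billiard_triple_confocal_chord[OF that] that
    unfolding billiard_triple_def by blast
  from assms show ?thesis
    by (cases rule: three_periodic_vertices) (simp_all add: vertex chord_lambda_reflect)
qed

lemma three_periodic_side_tangent:
  assumes "three_periodic a b P1 P2 P3"
  shows "line_tangent_ellipse caustic_a caustic_b P1 P2"
  using line_tangent_confocal[OF ab_neq_0 _ _ caustic_axes_sq] caustic_axes_pos
    three_periodic_chord_lambda[OF assms] three_periodic_distinct[OF assms] assms
  unfolding three_periodic_def by simp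

lemma axes_via_delta:
  assumes "4 * k * \<delta> = b^2 * (k^2 + 3)"
  shows "a * (\<delta> - b^2) / (a^2 - b^2) = caustic_a" "b * (a^2 - \<delta>) / (a^2 - b^2) = caustic_b"
    "a * (\<delta> - b^2) / (a^2 + b^2) = x55_a" "b * (a^2 - \<delta>) / (a^2 + b^2) = x55_b"
proof -
  define q where "q = k^2 + 6 * k - 3"
  have "4 * k * ((\<delta> - b^2) * (k + 1) - (k - 1) * (a^2 - b^2)) = 0"
    "4 * k * ((a^2 - \<delta>) * (k + 1) - 2 * (a^2 - b^2)) = 0"
    "4 * k * ((\<delta> - b^2) * q - ((k - 1) * (k - 3)) * (a^2 + b^2)) = 0"
    "4 * k * ((a^2 - \<delta>) * q - (2 * (k - 3)) * (a^2 + b^2)) = 0"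
    unfolding q_def using a_sq assms by algebra+
  then have cross: "(\<delta> - b^2) * (k + 1) = (k - 1) * (a^2 - b^2)"
    "(a^2 - \<delta>) * (k + 1) = 2 * (a^2 - b^2)"
    "(\<delta> - b^2) * q = ((k - 1) * (k - 3)) * (a^2 + b^2)"
    "(a^2 - \<delta>) * q = (2 * (k - 3)) * (a^2 + b^2)"
    using k_gt_3 by auto
  have "a^2 - b^2 \<noteq> 0" "k + 1 \<noteq> 0" "q \<noteq> 0" "a^2 + b^2 \<noteq> 0"
    unfolding q_def using b_sq_less_a_sq k_gt_3 x55_denom_pos b_pos by (simp_all add: add_nonneg_pos)
  note frac_eq = iffD2[OF frac_eq_eq]
  show "a * (\<delta> - b^2) / (a^2 - b^2) = caustic_a"
    unfolding caustic_a_def using \<open>a^2 - b^2 \<noteq> 0\<close> \<open>k + 1 \<noteq> 0\<close> cross(1)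
    by (intro frac_eq) (simp_all add: mult.assoc)
  show "b * (a^2 - \<delta>) / (a^2 - b^2) = caustic_b"
    unfolding caustic_b_def using \<open>a^2 - b^2 \<noteq> 0\<close> \<open>k + 1 \<noteq> 0\<close> cross(2)
    by (intro frac_eq) (simp_all add: mult_ac)
  show "a * (\<delta> - b^2) / (a^2 + b^2) = x55_a"
    unfolding x55_a_def q_def[symmetric] using \<open>a^2 + b^2 \<noteq> 0\<close> \<open>q \<noteq> 0\<close> cross(3)
    by (intro frac_eq) (simp_all add: mult.assoc)
  show "b * (a^2 - \<delta>) / (a^2 + b^2) = x55_b"
    unfolding x55_b_def q_def[symmetric] using \<open>a^2 + b^2 \<noteq> 0\<close> \<open>q \<noteq> 0\<close> cross(4)
    by (intro frac_eq) (simp_all add: mult.assoc)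
qed

end

lemma billiard_ellipse_of_axes:
  fixes a b :: real
  assumes "a > b" "b > 0"
  defines "\<delta> \<equiv> sqrt (a^4 - a^2 * b^2 + b^4)"
  defines "k \<equiv> (2 * a^2 - b^2 + 2 * \<delta>) / b^2"
  shows "billiard_ellipse a b k" "4 * k * \<delta> = b^2 * (k^2 + 3)"
proof -
  have "a^2 > b^2" "b^2 > 0"
    using assms(1,2) by (simp_all add: power_strict_mono)
  have disc: "a^4 - a^2 * b^2 + b^4 = (a^2 - b^2)^2 + a^2 * b^2"
    by algebra
  moreover have "(a^2 - b^2)^2 + a^2 * b^2 > 0"
    using assms(1,2) by (simp add: add_nonneg_pos)
  ultimately have "a^4 - a^2 * b^2 + b^4 > 0"
    by linarith
  then have \<delta>_sq: "\<delta>^2 = a^4 - a^2 * b^2 + b^4" and "\<delta> \<ge> 0"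
    unfolding \<delta>_def by simp_all
  have "\<delta> > 2 * b^2 - a^2"
  proof (cases "2 * b^2 - a^2 < 0")
    case False
    have "\<delta>^2 - (2 * b^2 - a^2)^2 = 3 * b^2 * (a^2 - b^2)"
      using \<delta>_sq by algebra
    moreover have "3 * b^2 * (a^2 - b^2) > 0"
      using \<open>a^2 > b^2\<close> \<open>b^2 > 0\<close> by simp
    ultimately have "(2 * b^2 - a^2)^2 < \<delta>^2"
      by linarith
    then show ?thesis
      using \<open>\<delta> \<ge> 0\<close> by (rule power2_less_imp_less)
  qed (use \<open>\<delta> \<ge> 0\<close> in simp)
  then have "k > 3"
    unfolding k_def using \<open>b^2 > 0\<close> by (simp add: field_simps)
  have kb: "b^2 * k = 2 * a^2 - b^2 + 2 * \<delta>"
    unfolding k_def using \<open>b^2 > 0\<close> by simp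
  then have "b^2 * (b^2 * (k^2 + 2 * k - 3) - 4 * a^2 * k) = 0"
    using \<delta>_sq by algebra
  then have "b^2 * (k^2 + 2 * k - 3) - 4 * a^2 * k = 0"
    using \<open>b^2 > 0\<close> by simp
  then have "4 * k * a^2 = b^2 * (k - 1) * (k + 3)"
    by algebra
  then show "billiard_ellipse a b k"
    using assms(1,2) \<open>k > 3\<close> by unfold_locales simp_all
  show "4 * k * \<delta> = b^2 * (k^2 + 3)"
    using kb \<open>4 * k * a^2 = b^2 * (k - 1) * (k + 3)\<close> \<open>b^2 > 0\<close> by algebra
qed

theorem theorem1:
  fixes a b :: real
  assumes "a > b" and "b > 0"
  defines "c \<equiv> sqrt (a^2 - b^2)"
      and "\<delta> \<equiv> sqrt (a^4 - a^2 * b^2 + b^4)"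
  defines "ac \<equiv> a * (\<delta> - b^2) / c^2"
      and "bc \<equiv> b * (a^2 - \<delta>) / c^2"
      and "a55 \<equiv> a * (\<delta> - b^2) / (a^2 + b^2)"
      and "b55 \<equiv> b * (a^2 - \<delta>) / (a^2 + b^2)"
  shows "locus h_X11 a b = {X. on_ellipse ac bc X}
       \<and> (\<forall>P1 P2 P3. three_periodic a b P1 P2 P3 \<longrightarrow>
             line_tangent_ellipse ac bc P1 P2 \<and> line_tangent_ellipse ac bc P2 P3
             \<and> line_tangent_ellipse ac bc P3 P1)
       \<and> locus h_X55 a b = {X. on_ellipse a55 b55 X}
       \<and> a55 / b55 = ac / bc"
proof -
  define k where "k = (2 * a^2 - b^2 + 2 * \<delta>) / b^2"
  interpret billiard_ellipse a b k
    using billiard_ellipse_of_axes[OF assms(1,2)] unfolding \<delta>_def k_def by simp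
  have "c^2 = a^2 - b^2"
    unfolding c_def using assms(1,2) by simp
  then have axes: "ac = caustic_a" "bc = caustic_b" "a55 = x55_a" "b55 = x55_b"
    using axes_via_delta billiard_ellipse_of_axes(2)[OF assms(1,2)]
    unfolding ac_def bc_def a55_def b55_def \<delta>_def k_def by simp_all
  have "line_tangent_ellipse caustic_a caustic_b P1 P2 \<and> line_tangent_ellipse caustic_a caustic_b P2 P3
      \<and> line_tangent_ellipse caustic_a caustic_b P3 P1" if "three_periodic a b P1 P2 P3" for P1 P2 P3
    using three_periodic_side_tangent three_periodic_rotate that by blast
  then show ?thesis
    unfolding axes using locus_X11 locus_X55 x55_axes_ratio by blast
qed

end
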